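(* Let $W\in\mathbb{R}^{m\times n}$ have rows $w_1,\dots,w_m$ that are iid $\mathcal{N}(0,I_n)$ random vectors, and for fixed $i$ let $E_i$ be the event $\langle w_i,\sum_{k=1}^m w_k\rangle\ge 0$. Let $m,n\to\infty$ with $m/n=c$. Then $\mathbb{P}(E_i)\to\frac12\mathrm{erfc}\!\left(-\frac{1}{\sqrt{2c}}\right)$.
   Context: $\mathrm{erfc}(z)=1-\frac{2}{\sqrt\pi}\int_0^z e^{-t^2}\,dt$. *)

theory Defs
  imports "HOL-Probability.Probability"
begin

text \<open>Complementary error function, erfc z = 1 - 2/sqrt pi * int_0^z exp(-t^2) dt
  (oriented interval integral, so negative z is handled correctly).\<close>
definition erfc :: "real \<Rightarrow> real" where
  "erfc z = 1 - 2 / sqrt pi * (LBINT t=ereal 0..ereal z. exp (- (t^2)))"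

text \<open>Law of an m x n matrix W with iid standard Gaussian entries W(k,j), k<m, j<n;
  rows w_k = (W(k,j))_j are then iid N(0,I_n).\<close>
definition gauss_matrix :: "nat \<Rightarrow> nat \<Rightarrow> (nat \<times> nat \<Rightarrow> real) measure" where
  "gauss_matrix m n = PiM ({..<m} \<times> {..<n}) (\<lambda>_. std_normal_distribution)"

definition event_E :: "nat \<Rightarrow> nat \<Rightarrow> nat \<Rightarrow> (nat \<times> nat \<Rightarrow> real) set" where
  "event_E m n i = {W \<in> space (gauss_matrix m n).
      (\<Sum>j<n. W (i, j) * (\<Sum>k<m. W (k, j))) \<ge> 0}"

end

theory Submission
  imports Defs
begin

(* Condition on the row w_i = x. Then <w_i, sum_k w_k> = |x|^2 + sum_{k ~= i} <x, w_k>, where the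
  second term is a centred Gaussian of variance (m - 1) |x|^2, so E_i has conditional probability
  Phi (|x| / sqrt (m - 1)). By Chebyshev's inequality |x|^2 lies within delta n of n except with
  probability at most 2 / (delta^2 n). Hence P(E_i) is squeezed between
  Phi (sqrt ((1 -+ delta) n / (m - 1))) -+ 2 / (delta^2 n), which tend to Phi (sqrt ((1 -+ delta) / c)).
  Letting delta -> 0 gives Phi (1 / sqrt c) = erfc (- 1 / sqrt (2 c)) / 2. *)

section \<open>The standard normal distribution function\<close>

abbreviation \<Phi> :: "real \<Rightarrow> real" where
  "\<Phi> \<equiv> cdf std_normal_distribution"

lemma measure_std_normal_singleton: "measure std_normal_distribution {x} = 0"
proof -
  have "AE y in lborel. y \<in> {x} \<longrightarrow> std_normal_density y = 0"
    using AE_lborel_singleton[of x] by eventually_elim auto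
  then have "{x} \<in> null_sets std_normal_distribution"
    by (subst null_sets_density_iff) auto
  then show ?thesis
    by (auto dest: null_setsD1 simp: measure_def)
qed

lemma isCont_Phi: "isCont \<Phi> x"
proof -
  interpret real_distribution std_normal_distribution by (rule real_dist_normal_dist)
  show ?thesis using isCont_cdf measure_std_normal_singleton by blast
qed

lemma Phi_zero: "\<Phi> 0 = 1/2"
proof -
  interpret real_distribution std_normal_distribution by (rule real_dist_normal_dist)
  have "distributed std_normal_distribution lborel (\<lambda>x. x) std_normal_density"
    unfolding distributed_def
    by (simp add: distr_cong[of _ _ lborel std_normal_distribution])
  from normal_density_affine[OF this, of "-1" 0]
  have reflect: "distr std_normal_distribution lborel uminus = std_normal_distribution"
    by (simp add: distributed_def)
  have "{0..} = {0} \<union> {0::real<..}"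
    by auto
  then have "measure std_normal_distribution {0<..} = measure std_normal_distribution {0..}"
    using finite_measure_Union[of "{0}" "{0<..}"] measure_std_normal_singleton[of 0] by simp
  also have "\<dots> = measure std_normal_distribution {..0}"
    by (subst reflect[symmetric], subst measure_distr) (auto simp: vimage_def atMost_def)
  finally have "measure std_normal_distribution {0<..} = \<Phi> 0"
    by (simp add: cdf_def)
  have "\<Phi> 0 + measure std_normal_distribution {0<..} = measure std_normal_distribution ({..0} \<union> {0<..})"
    by (subst finite_measure_Union) (auto simp: cdf_def)
  also have "{..0} \<union> {0<..} = (UNIV :: real set)"
    by auto
  finally have "\<Phi> 0 + measure std_normal_distribution {0<..} = 1"
    using prob_space by simp
  with \<open>measure std_normal_distribution {0<..} = \<Phi> 0\<close> show ?thesis by simp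
qed

lemma erfc_has_real_derivative:
  "(erfc has_real_derivative - 2 / sqrt pi * exp (- (x^2))) (at x)"
proof -
  define R where "R = \<bar>x\<bar> + 1"
  have "((\<lambda>u. LBINT t=ereal 0..ereal u. exp (- (t^2))) has_vector_derivative exp (- (x^2)))
          (at x within {-R..R})"
    by (rule interval_integral_FTC2) (auto simp: R_def intro!: continuous_intros)
  moreover have "at x within {-R..R} = at x"
    by (rule at_within_Icc_at) (auto simp: R_def)
  ultimately have "((\<lambda>u. LBINT t=ereal 0..ereal u. exp (- (t^2))) has_real_derivative exp (- (x^2)))
      (at x)"
    by (simp add: has_real_derivative_iff_has_vector_derivative)
  from DERIV_diff[OF DERIV_const DERIV_cmult[OF this, of "2 / sqrt pi"], of 1]
  show ?thesis
    unfolding erfc_def[abs_def] by simp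
qed

lemma erfc_0 [simp]: "erfc 0 = 1"
  by (simp add: erfc_def)

lemma half_erfc_has_real_derivative:
  "((\<lambda>x. 1/2 * erfc (- x / sqrt 2)) has_real_derivative std_normal_density x) (at x)"
proof -
  have "((\<lambda>x. - x / sqrt 2) has_real_derivative - 1 / sqrt 2) (at x)"
    using DERIV_cdivide[OF DERIV_minus[OF DERIV_ident], of "sqrt 2"] by simp
  then have "((\<lambda>x. 1/2 * erfc (- x / sqrt 2)) has_real_derivative
      1/2 * (- 2 / sqrt pi * exp (- ((- x / sqrt 2)^2)) * (- 1 / sqrt 2))) (at x)"
    by (intro DERIV_cmult DERIV_chain2[OF erfc_has_real_derivative])
  then show ?thesis
    by (simp add: std_normal_density_def power_divide real_sqrt_mult field_simps)
qed

lemma Phi_diff_antiderivative: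
  assumes F: "\<And>x. (F has_real_derivative std_normal_density x) (at x)" and "a \<le> b"
  shows "\<Phi> b - \<Phi> a = F b - F a"
proof (cases "a = b")
  case False
  with \<open>a \<le> b\<close> have "a < b"
    by simp
  interpret real_distribution std_normal_distribution
    by (rule real_dist_normal_dist)
  have "emeasure std_normal_distribution {a..b} = ennreal (F b - F a)"
    using nn_integral_FTC_Icc[of std_normal_density a b F] F \<open>a \<le> b\<close>
    by (simp add: emeasure_density)
  moreover have "F a \<le> F b"
    using \<open>a \<le> b\<close> by (rule DERIV_nonneg_imp_nondecreasing) (blast intro: F normal_density_nonneg)
  ultimately have "measure std_normal_distribution {a..b} = F b - F a"
    by (simp add: measure_def)
  moreover have "measure std_normal_distribution {a..b} = measure std_normal_distribution {a<..b}"
  proof -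
    have "{a..b} = {a} \<union> {a<..b}"
      using \<open>a \<le> b\<close> by auto
    then show ?thesis
      using finite_measure_Union[of "{a}" "{a<..b}"] measure_std_normal_singleton[of a] by simp
  qed
  ultimately show ?thesis
    using cdf_diff_eq[OF \<open>a < b\<close>] by simp
qed simp

lemma Phi_eq_erfc: "\<Phi> x = 1/2 * erfc (- x / sqrt 2)"
proof -
  have "\<Phi> x - \<Phi> 0 = 1/2 * erfc (- x / sqrt 2) - 1/2 * erfc (- 0 / sqrt 2)"
    using Phi_diff_antiderivative[OF half_erfc_has_real_derivative, of 0 x]
      Phi_diff_antiderivative[OF half_erfc_has_real_derivative, of x 0]
    by (cases "0 \<le> x") auto
  then show ?thesis
    by (simp add: Phi_zero)
qed

section \<open>Products of probability spaces\<close>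

lemma
  fixes f :: "'i \<Rightarrow> 'a \<Rightarrow> real"
  assumes M: "\<And>i. prob_space (M i)" and K: "finite K" "J \<subseteq> K"
    and f: "\<And>j. j \<in> J \<Longrightarrow> integrable (M j) (f j)"
  shows integrable_PiM_prod_subset: "integrable (PiM K M) (\<lambda>y. \<Prod>j\<in>J. f j (y j))"
    and integral_PiM_prod_subset: "(\<integral>y. (\<Prod>j\<in>J. f j (y j)) \<partial>PiM K M) = (\<Prod>j\<in>J. integral\<^sup>L (M j) (f j))"
proof -
  interpret product_sigma_finite M
    using M by (simp add: product_sigma_finite_def prob_space_imp_sigma_finite)
  define F where "F j = (if j \<in> J then f j else (\<lambda>_. 1))" for j
  have F: "integrable (M j) (F j)" for j
    using f M by (simp add: F_def finite_measure.integrable_const prob_space.finite_measure)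
  have "(\<Prod>j\<in>K. F j (y j)) = (\<Prod>j\<in>J. f j (y j))" for y
    using K by (intro prod.mono_neutral_cong_right) (auto simp: F_def)
  moreover have "(\<Prod>j\<in>K. integral\<^sup>L (M j) (F j)) = (\<Prod>j\<in>J. integral\<^sup>L (M j) (f j))"
    using K M by (intro prod.mono_neutral_cong_right) (auto simp: F_def prob_space.prob_space)
  ultimately show "integrable (PiM K M) (\<lambda>y. \<Prod>j\<in>J. f j (y j))"
    and "(\<integral>y. (\<Prod>j\<in>J. f j (y j)) \<partial>PiM K M) = (\<Prod>j\<in>J. integral\<^sup>L (M j) (f j))"
    using product_integrable_prod[OF K(1) F] product_integral_prod[OF K(1) F] by simp_all
qed

lemma
  fixes u :: "'a \<Rightarrow> real"
  assumes M: "prob_space M" and K: "finite K"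
    and u: "integrable M u" "integrable M (\<lambda>z. (u z)\<^sup>2)" "integral\<^sup>L M u = 0"
  shows integrable_PiM_iid_sum_square: "integrable (PiM K (\<lambda>_. M)) (\<lambda>y. (\<Sum>k\<in>K. u (y k))\<^sup>2)"
    and integral_PiM_iid_sum_square:
      "(\<integral>y. (\<Sum>k\<in>K. u (y k))\<^sup>2 \<partial>PiM K (\<lambda>_. M)) = card K * (\<integral>z. (u z)\<^sup>2 \<partial>M)"
proof -
  let ?P = "PiM K (\<lambda>_. M)"
  have square: "(\<Sum>k\<in>K. u (y k))\<^sup>2 = (\<Sum>k\<in>K. \<Sum>l\<in>K. u (y k) * u (y l))" for y
    by (simp add: power2_eq_square sum_product)
  have cross: "integrable ?P (\<lambda>y. u (y k) * u (y l)) \<and>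
      (\<integral>y. u (y k) * u (y l) \<partial>?P) = (if k = l then \<integral>z. (u z)\<^sup>2 \<partial>M else 0)"
    if "k \<in> K" "l \<in> K" for k l
  proof (cases "k = l")
    case True
    then show ?thesis
      using integrable_PiM_prod_subset[OF M K, of "{k}" "\<lambda>_ z. (u z)\<^sup>2"]
        integral_PiM_prod_subset[OF M K, of "{k}" "\<lambda>_ z. (u z)\<^sup>2"] that u
      by (simp add: power2_eq_square)
  next
    case False
    then show ?thesis
      using integrable_PiM_prod_subset[OF M K, of "{k, l}" "\<lambda>_. u"]
        integral_PiM_prod_subset[OF M K, of "{k, l}" "\<lambda>_. u"] that u
      by simp
  qed
  show "integrable ?P (\<lambda>y. (\<Sum>k\<in>K. u (y k))\<^sup>2)"
    unfolding square using cross by (intro Bochner_Integration.integrable_sum) auto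
  have "(\<integral>y. (\<Sum>k\<in>K. u (y k))\<^sup>2 \<partial>?P) = (\<Sum>k\<in>K. \<Sum>l\<in>K. \<integral>y. u (y k) * u (y l) \<partial>?P)"
    unfolding square using cross
    by (simp add: Bochner_Integration.integral_sum Bochner_Integration.integrable_sum)
  also have "\<dots> = (\<Sum>k\<in>K. \<Sum>l\<in>K. if k = l then \<integral>z. (u z)\<^sup>2 \<partial>M else 0)"
    using cross by (intro sum.cong) auto
  finally show "(\<integral>y. (\<Sum>k\<in>K. u (y k))\<^sup>2 \<partial>?P) = card K * (\<integral>z. (u z)\<^sup>2 \<partial>M)"
    using K by simp
qed

lemma prob_PiM_iid_sum_deviation:
  fixes u :: "'a \<Rightarrow> real"
  assumes M: "prob_space M" and K: "finite K" and "\<delta> > 0"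
    and u: "integrable M u" "integrable M (\<lambda>z. (u z)\<^sup>2)" "integral\<^sup>L M u = 0"
  shows "measure (PiM K (\<lambda>_. M)) {y \<in> space (PiM K (\<lambda>_. M)). \<delta> \<le> \<bar>\<Sum>k\<in>K. u (y k)\<bar>}
    \<le> card K * (\<integral>z. (u z)\<^sup>2 \<partial>M) / \<delta>\<^sup>2"
proof -
  let ?P = "PiM K (\<lambda>_. M)" and ?S = "\<lambda>y. \<Sum>k\<in>K. u (y k)"
  interpret P: prob_space ?P
    using M by (intro prob_space_PiM)
  have "integrable ?P (\<lambda>y. u (y k))" if "k \<in> K" for k
    using integrable_PiM_prod_subset[OF M K, of "{k}" "\<lambda>_. u"] that u by simp
  moreover have "(\<integral>y. u (y k) \<partial>?P) = 0" if "k \<in> K" for k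
    using integral_PiM_prod_subset[OF M K, of "{k}" "\<lambda>_. u"] that u by simp
  ultimately have mean: "P.expectation ?S = 0"
    by (simp add: Bochner_Integration.integral_sum)
  have "?S \<in> borel_measurable ?P"
    using u(1) by (intro borel_measurable_sum measurable_compose[OF measurable_component_singleton]) auto
  then have "P.prob {y \<in> space ?P. \<delta> \<le> \<bar>?S y - P.expectation ?S\<bar>} \<le> P.variance ?S / \<delta>\<^sup>2"
    using integrable_PiM_iid_sum_square[OF M K u] \<open>\<delta> > 0\<close> by (intro P.Chebyshev_inequality) auto
  then show ?thesis
    using integral_PiM_iid_sum_square[OF M K u] mean by simp
qed

lemma indep_vars_PiM_components:
  assumes M: "\<And>k. k \<in> K \<Longrightarrow> prob_space (M k)" and "K \<noteq> {}"
  shows "prob_space.indep_vars (PiM K M) M (\<lambda>k y. y k) K"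
proof -
  interpret P: prob_space "PiM K M"
    using M by (rule prob_space_PiM)
  have "distr (PiM K M) (PiM K M) (\<lambda>y. \<lambda>k\<in>K. y k) = distr (PiM K M) (PiM K M) (\<lambda>y. y)"
    by (rule distr_cong) (auto simp: space_PiM PiE_def extensional_restrict)
  also have "\<dots> = PiM K (\<lambda>k. distr (PiM K M) (M k) (\<lambda>y. y k))"
  proof -
    have "distr (PiM K M) (M k) (\<lambda>y. y k) = M k" if "k \<in> K" for k
      using M that by (rule distr_PiM_component)
    then show ?thesis
      by (simp cong: PiM_cong)
  qed
  finally show ?thesis
    using \<open>K \<noteq> {}\<close> by (subst P.indep_vars_iff_distr_eq_PiM') auto
qed

lemma
  assumes M: "\<And>i. prob_space (M i)" and IJ: "I \<inter> J = {}" "finite I" "finite J"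
    and A: "A \<in> sets (PiM (I \<union> J) M)"
  shows measure_PiM_fold_integral: "measure (PiM (I \<union> J) M) A
      = (\<integral>x. measure (PiM J M) ((\<lambda>y. merge I J (x, y)) -` A \<inter> space (PiM J M)) \<partial>PiM I M)"
    and integrable_PiM_fold_measure:
      "integrable (PiM I M) (\<lambda>x. measure (PiM J M) ((\<lambda>y. merge I J (x, y)) -` A \<inter> space (PiM J M)))"
proof -
  interpret product_sigma_finite M
    using M by (simp add: product_sigma_finite_def prob_space_imp_sigma_finite)
  interpret PI: prob_space "PiM I M"
    using M by (rule prob_space_PiM)
  interpret PJ: prob_space "PiM J M"
    using M by (rule prob_space_PiM)
  define h where "h x = measure (PiM J M) ((\<lambda>y. merge I J (x, y)) -` A \<inter> space (PiM J M))" for x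
  have "(\<lambda>x. enn2real (emeasure (PiM J M) ((\<lambda>y. merge I J (x, y)) -` A \<inter> space (PiM J M))))
      \<in> borel_measurable (PiM I M)"
    using emeasure_fold_measurable[OF IJ A] by measurable
  then have "h \<in> borel_measurable (PiM I M)"
    by (simp add: h_def[abs_def] measure_def)
  then show h: "integrable (PiM I M) h"
    by (intro PI.integrable_const_bound[where B=1]) (auto simp: h_def)
  have "emeasure (PiM (I \<union> J) M) A = (\<integral>\<^sup>+x. ennreal (h x) \<partial>PiM I M)"
    unfolding emeasure_fold_integral[OF IJ A] h_def by (simp add: PJ.emeasure_eq_measure)
  also have "\<dots> = ennreal (\<integral>x. h x \<partial>PiM I M)"
    by (intro nn_integral_eq_integral h) (auto simp: h_def)
  finally show "measure (PiM (I \<union> J) M) A = (\<integral>x. h x \<partial>PiM I M)"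
    by (simp add: measure_def h_def)
qed

lemma (in prob_space) expectation_bounds_outside_event:
  fixes f :: "'a \<Rightarrow> real"
  assumes f: "integrable M f" "\<And>x. x \<in> space M \<Longrightarrow> 0 \<le> f x \<and> f x \<le> 1"
    and B: "B \<in> events" "\<And>x. x \<in> space M \<Longrightarrow> x \<notin> B \<Longrightarrow> lo \<le> f x \<and> f x \<le> hi"
    and "lo \<le> 1" "0 \<le> hi"
  shows "lo - prob B \<le> expectation f" and "expectation f \<le> hi + prob B"
proof -
  have indicator: "integrable M (indicator B :: 'a \<Rightarrow> real)" "expectation (indicator B) = prob B"
    using B(1) by (simp_all add: emeasure_eq_measure)
  have "(\<integral>x. lo - indicator B x \<partial>M) \<le> expectation f"
    using f B \<open>lo \<le> 1\<close> indicator by (intro integral_mono) (force split: split_indicator)+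
  then show "lo - prob B \<le> expectation f"
    using indicator prob_space by simp
  have "expectation f \<le> (\<integral>x. hi + indicator B x \<partial>M)"
    using f B \<open>0 \<le> hi\<close> indicator by (intro integral_mono) (force split: split_indicator)+
  then show "expectation f \<le> hi + prob B"
    using indicator prob_space by simp
qed

section \<open>Standard Gaussian vectors\<close>

abbreviation std_normal_vector :: "'k set \<Rightarrow> ('k \<Rightarrow> real) measure" where
  "std_normal_vector K \<equiv> PiM K (\<lambda>_. std_normal_distribution)"

lemma prob_space_std_normal_vector: "prob_space (std_normal_vector K)"
  by (intro prob_space_PiM prob_space_normal_density) simp

lemma distributed_std_normal_vector_component:
  assumes "k \<in> K"
  shows "distributed (std_normal_vector K) lborel (\<lambda>y. y k) std_normal_density"
proof -
  have "distr (std_normal_vector K) lborel (\<lambda>y. y k)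
      = distr (std_normal_vector K) std_normal_distribution (\<lambda>y. y k)"
    by (rule distr_cong) auto
  also have "\<dots> = std_normal_distribution"
    by (rule distr_PiM_component) (simp_all add: prob_space_normal_density assms)
  finally show ?thesis
    unfolding distributed_def using assms by auto
qed

lemma distributed_std_normal_vector_linear_combination:
  fixes a :: "'k \<Rightarrow> real"
  assumes K: "finite K" and a: "(\<Sum>k\<in>K. (a k)\<^sup>2) > 0"
  shows "distributed (std_normal_vector K) lborel (\<lambda>y. \<Sum>k\<in>K. a k * y k)
           (normal_density 0 (sqrt (\<Sum>k\<in>K. (a k)\<^sup>2)))"
proof -
  interpret P: prob_space "std_normal_vector K"
    by (rule prob_space_std_normal_vector)
  define J where "J = {k \<in> K. a k \<noteq> 0}"
  have J: "finite J" "J \<subseteq> K"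
    using K by (auto simp: J_def)
  have restrict_J: "(\<Sum>k\<in>K. a k * y k) = (\<Sum>k\<in>J. a k * y k)" "(\<Sum>k\<in>K. (a k)\<^sup>2) = (\<Sum>k\<in>J. (a k)\<^sup>2)" for y
    unfolding J_def by (auto intro: sum.mono_neutral_right[OF K])
  then have "J \<noteq> {}"
    using a by auto
  have "P.indep_vars (\<lambda>_. std_normal_distribution) (\<lambda>k y. y k) K"
    using \<open>J \<noteq> {}\<close> J by (intro indep_vars_PiM_components prob_space_normal_density) auto
  then have "P.indep_vars (\<lambda>_. borel) (\<lambda>k y. a k * y k) J"
    using P.indep_vars_compose2[OF P.indep_vars_subset[OF _ J(2)], where Y="\<lambda>k z. a k * z" and N="\<lambda>_. borel"]
    by auto
  moreover have "distributed (std_normal_vector K) lborel (\<lambda>y. a k * y k) (normal_density 0 \<bar>a k\<bar>)"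
    if "k \<in> J" for k
    using P.normal_density_affine[OF distributed_std_normal_vector_component[of k K], where \<alpha>="a k" and \<beta>=0] that J
    by (auto simp: J_def)
  ultimately show ?thesis
    using P.sum_indep_normal[OF J(1) \<open>J \<noteq> {}\<close>, of "\<lambda>k y. a k * y k" "\<lambda>k. \<bar>a k\<bar>" "\<lambda>_. 0"]
    by (auto simp: J_def restrict_J)
qed

lemma prob_std_normal_vector_halfspace:
  fixes a :: "'k \<Rightarrow> real"
  assumes K: "finite K" and a: "(\<Sum>k\<in>K. (a k)\<^sup>2) > 0"
  shows "measure (std_normal_vector K) {y \<in> space (std_normal_vector K). 0 \<le> b + (\<Sum>k\<in>K. a k * y k)}
           = \<Phi> (b / sqrt (\<Sum>k\<in>K. (a k)\<^sup>2))"
proof -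
  interpret P: prob_space "std_normal_vector K"
    by (rule prob_space_std_normal_vector)
  define \<sigma> where "\<sigma> = sqrt (\<Sum>k\<in>K. (a k)\<^sup>2)"
  define Z where "Z y = (- 1 / \<sigma>) * (\<Sum>k\<in>K. a k * y k)" for y
  have "\<sigma> > 0"
    using a by (simp add: \<sigma>_def)
  then have "distributed (std_normal_vector K) lborel (\<lambda>y. 0 + (- 1 / \<sigma>) * (\<Sum>k\<in>K. a k * y k))
      (normal_density (0 + (- 1 / \<sigma>) * 0) (\<bar>- 1 / \<sigma>\<bar> * \<sigma>))"
    using distributed_std_normal_vector_linear_combination[OF K a]
    by (intro P.normal_density_affine) (auto simp: \<sigma>_def)
  then have Z: "distributed (std_normal_vector K) lborel Z std_normal_density"
    using \<open>\<sigma> > 0\<close> by (simp add: Z_def[abs_def])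
  have "{y \<in> space (std_normal_vector K). 0 \<le> b + (\<Sum>k\<in>K. a k * y k)}
      = Z -` {..b / \<sigma>} \<inter> space (std_normal_vector K)"
    using \<open>\<sigma> > 0\<close> by (auto simp: Z_def field_simps)
  also have "measure (std_normal_vector K) \<dots> = measure (distr (std_normal_vector K) lborel Z) {..b / \<sigma>}"
    using Z by (subst measure_distr) (auto simp: distributed_def)
  finally show ?thesis
    using Z by (simp add: distributed_def cdf_def \<sigma>_def)
qed

lemma prob_std_normal_vector_norm_deviation:
  assumes K: "finite K" and "\<delta> > 0"
  shows "measure (std_normal_vector K)
           {y \<in> space (std_normal_vector K). \<delta> \<le> \<bar>(\<Sum>k\<in>K. (y k)\<^sup>2) - card K\<bar>} \<le> 2 * card K / \<delta>\<^sup>2"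
proof -
  interpret N: prob_space std_normal_distribution
    by (rule prob_space_normal_density) simp
  have moments: "integral\<^sup>L std_normal_distribution (\<lambda>z. z ^ 2) = 1"
      "integral\<^sup>L std_normal_distribution (\<lambda>z. z ^ 4) = 3"
      "integrable std_normal_distribution (\<lambda>z. z ^ 2)" "integrable std_normal_distribution (\<lambda>z. z ^ 4)"
    using std_normal_distribution_even_moments[of 1] std_normal_distribution_even_moments[of 2]
    by (simp_all add: fact_numeral)
  have square: "(z\<^sup>2 - 1)\<^sup>2 = z ^ 4 - 2 * z\<^sup>2 + 1" for z :: real
    by (simp add: power2_eq_square power4_eq_xxxx algebra_simps)
  have "integrable std_normal_distribution (\<lambda>z. z\<^sup>2 - 1)"
      "integrable std_normal_distribution (\<lambda>z. (z\<^sup>2 - 1)\<^sup>2)"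
      "(\<integral>z. z\<^sup>2 - 1 \<partial>std_normal_distribution) = 0"
      "(\<integral>z. (z\<^sup>2 - 1)\<^sup>2 \<partial>std_normal_distribution) = 2"
    using moments N.prob_space by (simp_all add: square)
  from prob_PiM_iid_sum_deviation[OF N.prob_space_axioms K \<open>\<delta> > 0\<close> this(1,2,3)] this(4)
  show ?thesis
    by (simp add: sum_subtractf mult.commute)
qed

section \<open>Conditioning on a row of the matrix\<close>

definition other_rows :: "nat \<Rightarrow> nat \<Rightarrow> nat \<Rightarrow> (nat \<times> nat) set" where
  "other_rows m n i = ({..<m} - {i}) \<times> {..<n}"

definition prob_E_given_row :: "nat \<Rightarrow> nat \<Rightarrow> nat \<Rightarrow> (nat \<times> nat \<Rightarrow> real) \<Rightarrow> real" where
  "prob_E_given_row m n i x = measure (std_normal_vector (other_rows m n i))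
     ((\<lambda>y. merge ({i} \<times> {..<n}) (other_rows m n i) (x, y)) -` event_E m n i
        \<inter> space (std_normal_vector (other_rows m n i)))"

lemma event_E_in_sets:
  assumes "i < m"
  shows "event_E m n i \<in> sets (gauss_matrix m n)"
proof -
  have [measurable]: "(\<lambda>W. \<Sum>j<n. W (i, j) * (\<Sum>k<m. W (k, j))) \<in> borel_measurable (gauss_matrix m n)"
    unfolding gauss_matrix_def using assms
    by (intro borel_measurable_sum borel_measurable_times measurable_component_singleton) auto
  show ?thesis
    unfolding event_E_def by measurable
qed

lemma inner_product_with_row_sum:
  fixes W :: "nat \<times> nat \<Rightarrow> real"
  assumes "i < m"
  shows "(\<Sum>j<n. W (i, j) * (\<Sum>k<m. W (k, j)))
    = (\<Sum>j<n. (W (i, j))\<^sup>2) + (\<Sum>p\<in>other_rows m n i. W (i, snd p) * W p)"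
proof -
  have "(\<Sum>j<n. W (i, j) * (\<Sum>k<m. W (k, j)))
      = (\<Sum>j<n. (W (i, j))\<^sup>2 + (\<Sum>k\<in>{..<m} - {i}. W (i, j) * W (k, j)))"
    using assms by (intro sum.cong) (simp_all add: sum.remove[of "{..<m}" i] power2_eq_square
        distrib_left sum_distrib_left)
  also have "\<dots> = (\<Sum>j<n. (W (i, j))\<^sup>2) + (\<Sum>k\<in>{..<m} - {i}. \<Sum>j<n. W (i, j) * W (k, j))"
    by (simp add: sum.distrib sum.swap[of _ "{..<n}"])
  also have "\<dots> = (\<Sum>j<n. (W (i, j))\<^sup>2) + (\<Sum>p\<in>other_rows m n i. W (i, snd p) * W p)"
    by (simp add: other_rows_def sum.cartesian_product case_prod_beta)
  finally show ?thesis .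
qed

lemma sum_squares_row_over_other_rows:
  fixes x :: "nat \<times> nat \<Rightarrow> real"
  assumes "i < m"
  shows "(\<Sum>p\<in>other_rows m n i. (x (i, snd p))\<^sup>2) = (real m - 1) * (\<Sum>j<n. (x (i, j))\<^sup>2)"
proof -
  have "(\<Sum>p\<in>other_rows m n i. (x (i, snd p))\<^sup>2) = (\<Sum>k\<in>{..<m} - {i}. \<Sum>j<n. (x (i, j))\<^sup>2)"
    unfolding other_rows_def by (subst sum.cartesian_product) (simp add: case_prod_beta)
  then show ?thesis
    using assms by simp
qed

lemma
  assumes "i < m"
  shows measure_event_E_eq_integral: "measure (gauss_matrix m n) (event_E m n i)
      = (\<integral>x. prob_E_given_row m n i x \<partial>std_normal_vector ({i} \<times> {..<n}))"
    and integrable_prob_E_given_row: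
      "integrable (std_normal_vector ({i} \<times> {..<n})) (prob_E_given_row m n i)"
proof -
  have rows: "{i} \<times> {..<n} \<union> other_rows m n i = {..<m} \<times> {..<n}"
    using assms by (auto simp: other_rows_def)
  have fold: "({i} \<times> {..<n}) \<inter> other_rows m n i = {}" "finite ({i} \<times> {..<n})" "finite (other_rows m n i)"
    by (auto simp: other_rows_def)
  have "event_E m n i \<in> sets (std_normal_vector ({i} \<times> {..<n} \<union> other_rows m n i))"
    using event_E_in_sets[OF assms] by (simp add: rows gauss_matrix_def)
  from measure_PiM_fold_integral[OF _ fold this] integrable_PiM_fold_measure[OF _ fold this]
  show "measure (gauss_matrix m n) (event_E m n i)
      = (\<integral>x. prob_E_given_row m n i x \<partial>std_normal_vector ({i} \<times> {..<n}))"
    and "integrable (std_normal_vector ({i} \<times> {..<n})) (prob_E_given_row m n i)"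
    by (simp_all add: prob_space_normal_density rows gauss_matrix_def prob_E_given_row_def[abs_def])
qed

lemma prob_E_given_row_eq:
  fixes x :: "nat \<times> nat \<Rightarrow> real"
  assumes "i < m" "2 \<le> m" and x: "x \<in> space (std_normal_vector ({i} \<times> {..<n}))"
    and q: "0 < (\<Sum>j<n. (x (i, j))\<^sup>2)"
  shows "prob_E_given_row m n i x = \<Phi> (sqrt ((\<Sum>j<n. (x (i, j))\<^sup>2) / (real m - 1)))"
proof -
  define q where "q = (\<Sum>j<n. (x (i, j))\<^sup>2)"
  let ?I = "{i} \<times> {..<n}" and ?J = "other_rows m n i"
  let ?W = "\<lambda>y. merge ?I ?J (x, y)"
  have W_row: "?W y (i, j) = x (i, j)" if "j < n" for y j
    using that by (simp add: merge_def)
  have W_other: "?W y p = y p" if "p \<in> ?J" for y p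
    using that by (auto simp: merge_def other_rows_def)
  have "?W -` event_E m n i \<inter> space (std_normal_vector ?J)
      = {y \<in> space (std_normal_vector ?J). 0 \<le> q + (\<Sum>p\<in>?J. x (i, snd p) * y p)}"
  proof -
    have rows: "?I \<union> ?J = {..<m} \<times> {..<n}"
      using \<open>i < m\<close> by (auto simp: other_rows_def)
    have "?W y \<in> space (gauss_matrix m n)" for y
      unfolding gauss_matrix_def rows[symmetric] by (simp add: space_PiM PiE_def)
    moreover have "(\<Sum>j<n. ?W y (i, j) * (\<Sum>k<m. ?W y (k, j))) = q + (\<Sum>p\<in>?J. x (i, snd p) * y p)" for y
      unfolding inner_product_with_row_sum[OF \<open>i < m\<close>] q_def using W_row W_other
      by (auto simp: other_rows_def intro!: sum.cong)
    ultimately show ?thesis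
      by (auto simp: event_E_def)
  qed
  moreover have "0 < (\<Sum>p\<in>?J. (x (i, snd p))\<^sup>2)"
    using q \<open>2 \<le> m\<close> by (simp add: sum_squares_row_over_other_rows[OF \<open>i < m\<close>])
  moreover have "finite ?J"
    by (simp add: other_rows_def)
  ultimately have "prob_E_given_row m n i x = \<Phi> (q / sqrt ((real m - 1) * q))"
    unfolding prob_E_given_row_def
    by (simp add: prob_std_normal_vector_halfspace sum_squares_row_over_other_rows[OF \<open>i < m\<close>] q_def)
  also have "q / sqrt ((real m - 1) * q) = sqrt (q / (real m - 1))"
  proof -
    have "q / sqrt (M * q) = sqrt (q / M)" if "0 < M" for M :: real
      using that q by (simp add: q_def real_sqrt_mult real_sqrt_divide field_simps)
    then show ?thesis
      using \<open>2 \<le> m\<close> by simp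
  qed
  finally show ?thesis
    unfolding q_def .
qed

lemma prob_event_E_bounds:
  assumes "i < m" "2 \<le> m" "0 < \<delta>" "\<delta> < 1" "0 < n"
  shows "\<Phi> (sqrt ((1 - \<delta>) * n / (real m - 1))) - 2 / (\<delta>\<^sup>2 * n)
           \<le> measure (gauss_matrix m n) (event_E m n i)"
    and "measure (gauss_matrix m n) (event_E m n i)
           \<le> \<Phi> (sqrt ((1 + \<delta>) * n / (real m - 1))) + 2 / (\<delta>\<^sup>2 * n)"
proof -
  let ?R = "std_normal_vector ({i} \<times> {..<n})"
  interpret R: prob_space ?R
    by (rule prob_space_std_normal_vector)
  interpret N: real_distribution std_normal_distribution
    by (rule real_dist_normal_dist)
  define lo where "lo = \<Phi> (sqrt ((1 - \<delta>) * n / (real m - 1)))"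
  define hi where "hi = \<Phi> (sqrt ((1 + \<delta>) * n / (real m - 1)))"
  have row_sum: "(\<Sum>p\<in>{i} \<times> {..<n}. (x p)\<^sup>2) = (\<Sum>j<n. (x (i, j))\<^sup>2)" for x :: "nat \<times> nat \<Rightarrow> real"
  proof -
    have "(\<Sum>p\<in>{i} \<times> {..<n}. (x p)\<^sup>2) = (\<Sum>k\<in>{i}. \<Sum>j<n. (x (k, j))\<^sup>2)"
      by (subst sum.cartesian_product) (simp add: case_prod_beta)
    then show ?thesis
      by simp
  qed
  define B where
    "B = {x \<in> space ?R. \<delta> * n \<le> \<bar>(\<Sum>p\<in>{i} \<times> {..<n}. (x p)\<^sup>2) - card ({i} \<times> {..<n})\<bar>}"
  have "B \<in> R.events"
    unfolding B_def by measurable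
  have "R.prob B \<le> 2 * card ({i} \<times> {..<n}) / (\<delta> * n)\<^sup>2"
    unfolding B_def using assms by (intro prob_std_normal_vector_norm_deviation) auto
  also have "\<dots> = 2 / (\<delta>\<^sup>2 * n)"
    using assms by (simp add: card_cartesian_product power2_eq_square)
  finally have prob_B: "R.prob B \<le> 2 / (\<delta>\<^sup>2 * n)" .
  have "lo \<le> prob_E_given_row m n i x \<and> prob_E_given_row m n i x \<le> hi"
    if x: "x \<in> space ?R" "x \<notin> B" for x
  proof -
    define q where "q = (\<Sum>j<n. (x (i, j))\<^sup>2)"
    have "(1 - \<delta>) * n < q" "q < (1 + \<delta>) * n"
      using x by (auto simp: B_def row_sum q_def card_cartesian_product algebra_simps)
    moreover have "0 < q"
      using \<open>(1 - \<delta>) * n < q\<close> \<open>\<delta> < 1\<close> by (smt (verit) \<open>0 < n\<close> mult_nonneg_nonneg of_nat_0_le_iff)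
    ultimately show ?thesis
      using prob_E_given_row_eq[OF \<open>i < m\<close> \<open>2 \<le> m\<close> x(1)] \<open>2 \<le> m\<close>
      by (auto simp: q_def lo_def hi_def intro!: N.cdf_nondecreasing real_sqrt_le_mono divide_right_mono)
  qed
  moreover have "0 \<le> prob_E_given_row m n i x \<and> prob_E_given_row m n i x \<le> 1" for x
    unfolding prob_E_given_row_def by (simp add: prob_space.prob_le_1[OF prob_space_std_normal_vector])
  moreover have "lo \<le> 1" "0 \<le> hi"
    by (simp_all add: lo_def hi_def N.cdf_bounded_prob N.cdf_nonneg)
  ultimately have "lo - R.prob B \<le> R.expectation (prob_E_given_row m n i)"
      and "R.expectation (prob_E_given_row m n i) \<le> hi + R.prob B"
    using R.expectation_bounds_outside_event[OF integrable_prob_E_given_row[OF \<open>i < m\<close>] _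
        \<open>B \<in> R.events\<close>]
    by blast+
  with measure_event_E_eq_integral[OF \<open>i < m\<close>, of n] prob_B
  show "lo - 2 / (\<delta>\<^sup>2 * n) \<le> measure (gauss_matrix m n) (event_E m n i)"
    and "measure (gauss_matrix m n) (event_E m n i) \<le> hi + 2 / (\<delta>\<^sup>2 * n)"
    unfolding lo_def hi_def by linarith+
qed

section \<open>The limit\<close>

lemma LIMSEQ_sandwich_continuous_family:
  fixes a :: "nat \<Rightarrow> real" and g :: "real \<Rightarrow> real"
  assumes "isCont g 0"
    and lo: "\<And>\<delta>. 0 < \<delta> \<Longrightarrow> \<delta> < 1 \<Longrightarrow> lo \<delta> \<longlonglongrightarrow> g (- \<delta>)"
    and hi: "\<And>\<delta>. 0 < \<delta> \<Longrightarrow> \<delta> < 1 \<Longrightarrow> hi \<delta> \<longlonglongrightarrow> g \<delta>"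
    and between: "\<And>\<delta>. 0 < \<delta> \<Longrightarrow> \<delta> < 1 \<Longrightarrow> \<forall>\<^sub>F t in sequentially. lo \<delta> t \<le> a t \<and> a t \<le> hi \<delta> t"
  shows "a \<longlonglongrightarrow> g 0"
proof (rule tendstoI)
  fix e :: real
  assume "0 < e"
  then obtain s where "0 < s" and s: "\<And>d. \<bar>d\<bar> < s \<Longrightarrow> \<bar>g d - g 0\<bar> < e"
    using \<open>isCont g 0\<close> unfolding continuous_at_eps_delta dist_real_def by force
  define \<delta> where "\<delta> = min s (1 / 2) / 2"
  have \<delta>: "0 < \<delta>" "\<delta> < 1" "\<delta> < s"
    using \<open>0 < s\<close> by (auto simp: \<delta>_def)
  have "g 0 - e < g (- \<delta>)" "g \<delta> < g 0 + e"
    using s[of "- \<delta>"] s[of \<delta>] \<delta> by (auto simp: abs_less_iff)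
  with lo[OF \<delta>(1,2)] hi[OF \<delta>(1,2)]
  have "\<forall>\<^sub>F t in sequentially. g 0 - e < lo \<delta> t" "\<forall>\<^sub>F t in sequentially. hi \<delta> t < g 0 + e"
    by (auto elim!: order_tendstoD)
  with between[OF \<delta>(1,2)] show "\<forall>\<^sub>F t in sequentially. dist (a t) (g 0) < e"
    by eventually_elim (auto simp: dist_real_def)
qed

lemma LIMSEQ_Phi_sqrt_ratio:
  assumes "c > 0" and "filterlim n at_top sequentially" and "\<And>t. real (m t) = c * real (n t)"
  shows "(\<lambda>t. \<Phi> (sqrt (d * n t / (real (m t) - 1)))) \<longlonglongrightarrow> \<Phi> (sqrt (d / c))"
proof -
  have n_lim: "filterlim (\<lambda>t. real (n t)) at_top sequentially"
    by (rule filterlim_compose[OF filterlim_real_sequentially assms(2)])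
  then have "\<forall>\<^sub>F t in sequentially. 0 < real (n t)"
    unfolding filterlim_at_top_dense by blast
  then have "\<forall>\<^sub>F t in sequentially. d * n t / (real (m t) - 1) = d / (c - 1 / n t)"
    by eventually_elim (simp add: assms(3) field_simps)
  moreover have "(\<lambda>t. d / (c - 1 / n t)) \<longlonglongrightarrow> d / (c - 0)"
    using \<open>c > 0\<close> tendsto_inverse_0_at_top[OF n_lim]
    by (intro tendsto_intros) (auto simp: inverse_eq_divide)
  ultimately have "(\<lambda>t. d * n t / (real (m t) - 1)) \<longlonglongrightarrow> d / c"
    by (simp add: tendsto_cong)
  then show ?thesis
    by (intro isCont_tendsto_compose[OF isCont_Phi] tendsto_real_sqrt)
qed

theorem lemma3:
  fixes c :: real and m n :: "nat \<Rightarrow> nat" and i :: nat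
  assumes "c > 0"
    and "filterlim m at_top sequentially" and "filterlim n at_top sequentially"
    and "\<And>t. real (m t) = c * real (n t)"
    and "\<And>t. i < m t"
  shows "(\<lambda>t. measure (gauss_matrix (m t) (n t)) (event_E (m t) (n t) i))
           \<longlonglongrightarrow> 1/2 * erfc (- 1 / sqrt (2 * c))"
proof -
  note c = assms(1) and m_lim = assms(2) and n_lim = assms(3) and mn = assms(4) and i = assms(5)
  define g where "g d = \<Phi> (sqrt ((1 + d) / c))" for d
  define lo where "lo \<delta> t = \<Phi> (sqrt ((1 - \<delta>) * n t / (real (m t) - 1))) - 2 / (\<delta>\<^sup>2 * n t)"
    for \<delta> :: real and t
  define hi where "hi \<delta> t = \<Phi> (sqrt ((1 + \<delta>) * n t / (real (m t) - 1))) + 2 / (\<delta>\<^sup>2 * n t)"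
    for \<delta> :: real and t
  have n_pos: "0 < n t" for t
    using i[of t] mn[of t] c by (metis gr_zeroI less_nat_zero_code mult_zero_right of_nat_eq_0_iff)
  have error_lim: "(\<lambda>t. 2 / (\<delta>\<^sup>2 * n t)) \<longlonglongrightarrow> 0" for \<delta> :: real
    using tendsto_mult_right_zero[OF tendsto_inverse_0_at_top[OF
        filterlim_compose[OF filterlim_real_sequentially n_lim]], of "2 / \<delta>\<^sup>2"]
    by (simp add: field_simps)
  have m_ge_2: "\<forall>\<^sub>F t in sequentially. 2 \<le> m t"
    using m_lim by (simp add: filterlim_at_top)
  have "(\<lambda>t. measure (gauss_matrix (m t) (n t)) (event_E (m t) (n t) i)) \<longlonglongrightarrow> g 0"
  proof (rule LIMSEQ_sandwich_continuous_family[of g lo hi])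
    show "isCont g 0"
      unfolding g_def[abs_def] using c by (intro isCont_o2[OF _ isCont_Phi] continuous_intros) auto
  next
    fix \<delta> :: real
    assume \<delta>: "0 < \<delta>" "\<delta> < 1"
    show "lo \<delta> \<longlonglongrightarrow> g (- \<delta>)" "hi \<delta> \<longlonglongrightarrow> g \<delta>"
      unfolding lo_def hi_def g_def
      using tendsto_diff[OF LIMSEQ_Phi_sqrt_ratio[OF c n_lim mn] error_lim]
        tendsto_add[OF LIMSEQ_Phi_sqrt_ratio[OF c n_lim mn] error_lim] by simp_all
    show "\<forall>\<^sub>F t in sequentially. lo \<delta> t \<le> measure (gauss_matrix (m t) (n t)) (event_E (m t) (n t) i) \<and>
        measure (gauss_matrix (m t) (n t)) (event_E (m t) (n t) i) \<le> hi \<delta> t"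
      using m_ge_2 unfolding lo_def hi_def
      by eventually_elim (use prob_event_E_bounds[OF i _ \<delta> n_pos] in auto)
  qed
  then show ?thesis
    by (simp add: g_def Phi_eq_erfc real_sqrt_divide real_sqrt_mult mult.commute)
qed

end
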